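(* Let $R$ be a commutative $\mathbb{C}$-algebra, let $f,g\colon\mathrm{Mac}^2\to R$ be $\mathbb{C}$-linear maps, and let $(G,\mathrm{wt})=(V,E,\mathrm{wt})$ be a weighted graph. Then $$(f*g)(\tilde{\mathbf{X}}_G)=\sum_{A\subseteq V}f(\tilde{\mathbf{X}}_{G|_A})\cdot g(\tilde{\mathbf{X}}_{G|_{\bar A}}),$$ where $\bar A=V\setminus A$.
   Context: All graphs are finite, simple and undirected. A weighted graph is a graph $(V,E)$ with $\mathrm{wt}\colon V\to\mathbb{P}$ ($\mathbb{P}$ the positive integers). For $A\subseteq V$, $G|_A$ is the induced subgraph on $A$ with restricted weights. Proper colorings are maps $\kappa\colon V\to\mathbb{P}$ with $\kappa(u)\ne\kappa(v)$ for every edge $uv$, forming $\mathrm{Col}(G)$. The chromatic MacMahon symmetric function is $\tilde{\mathbf{X}}_G=\sum_{\kappa\in\mathrm{Col}(G)}\prod_{v\in V}x_{\kappa(v)}y_{\kappa(v)}^{\mathrm{wt}(v)}$ (equal to $1$ for the empty graph) in commuting indeterminates $x_1,x_2,\dots,y_1,y_2,\dots$; it lies in $\mathrm{Mac}^2$, the algebra of power series invariant under simultaneously permuting indices of both alphabets. $\mathrm{Mac}^2$ has basis $p_{\boldsymbol{\Lambda}}=\prod_{i}p_{\boldsymbol{\lambda}^{(i)}}$ over unordered lists $\boldsymbol{\Lambda}=(\boldsymbol{\lambda}^{(1)},\dots,\boldsymbol{\lambda}^{(\ell)})$ of vectors in $\mathbb{N}^2\setminus\{(0,0)\}$, where $p_{(a,b)}=\sum_j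 x_j^ay_j^b$ and $p_\emptyset=1$. Its coproduct is the linear map $\Delta(p_{\boldsymbol{\Lambda}})=\sum_{J\subseteq[\ell]}p_{\boldsymbol{\Lambda}|_J}\otimes p_{\boldsymbol{\Lambda}|_{\bar J}}$, with $\boldsymbol{\Lambda}|_J$ having parts $\boldsymbol{\lambda}^{(i)}$, $i\in J$, and $\bar J=[\ell]\setminus J$. The convolution of $f,g$ is $(f*g)(B)=\sum f(B_1)g(B_2)$ where $\Delta(B)=\sum B_1\otimes B_2$. *)

theory Defs
  imports Complex_Main "HOL-Library.Multiset" "HOL-Library.Product_Lexorder"
begin

text \<open>A monomial is an exponent assignment m, where m j = (a,b) means the factor
  x_j^a y_j^b. Indices j range over the positive integers; a power series is
  its coefficient function. Monomials with m 0 nonzero or with infinite support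
  always get coefficient 0 for the series considered here.\<close>

type_synonym mono2 = "nat \<Rightarrow> nat \<times> nat"
type_synonym ps2 = "mono2 \<Rightarrow> complex"

definition valid_shape :: "(nat \<times> nat) multiset \<Rightarrow> bool" where
  "valid_shape \<Lambda> \<longleftrightarrow> (0, 0) \<notin># \<Lambda>"

text \<open>p_Lambda = product over i of sum_j x_j^(a_i) y_j^(b_i); expanding the product,
  the coefficient of a monomial m is the number of index choices
  j : [l] -> positive integers whose combined monomial is m.\<close>
definition pcoef :: "(nat \<times> nat) multiset \<Rightarrow> ps2" where
  "pcoef \<Lambda> m = (let xs = sorted_list_of_multiset \<Lambda>; l = length xs in
     of_nat (card {j :: nat \<Rightarrow> nat.
        (\<forall>i<l. 1 \<le> j i) \<and> (\<forall>i. l \<le> i \<longrightarrow> j i = 0) \<and>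
        (\<forall>k. m k = ((\<Sum>i\<in>{i. i < l \<and> j i = k}. fst (xs ! i)),
                     (\<Sum>i\<in>{i. i < l \<and> j i = k}. snd (xs ! i))))}))"

definition lincomb :: "(nat \<times> nat) multiset set \<Rightarrow> ((nat \<times> nat) multiset \<Rightarrow> complex) \<Rightarrow> ps2" where
  "lincomb S c = (\<lambda>m. \<Sum>\<Lambda>\<in>S. c \<Lambda> * pcoef \<Lambda> m)"

text \<open>Mac^2: the (bounded-degree) MacMahon symmetric functions, i.e. the complex
  span of the basis p_Lambda.\<close>
definition Mac2 :: "ps2 set" where
  "Mac2 = {B. \<exists>S c. finite S \<and> (\<forall>\<Lambda>\<in>S. valid_shape \<Lambda>) \<and> B = lincomb S c}"

definition conv_basis :: "(ps2 \<Rightarrow> 'r::comm_ring_1) \<Rightarrow> (ps2 \<Rightarrow> 'r) \<Rightarrow> (nat \<times> nat) multiset \<Rightarrow> 'r" where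
  "conv_basis f g \<Lambda> = (let xs = sorted_list_of_multiset \<Lambda>; l = length xs in
     \<Sum>J\<in>Pow {0..<l}. f (pcoef (mset (nths xs J))) * g (pcoef (mset (nths xs ({0..<l} - J)))))"

text \<open>R is a commutative C-algebra given by its structure map phi : C -> R.
  The convolution is extended linearly from the basis.\<close>
definition conv :: "(complex \<Rightarrow> 'r::comm_ring_1) \<Rightarrow> (ps2 \<Rightarrow> 'r) \<Rightarrow> (ps2 \<Rightarrow> 'r) \<Rightarrow> ps2 \<Rightarrow> 'r" where
  "conv \<phi> f g B = (SOME r. \<exists>S c. finite S \<and> (\<forall>\<Lambda>\<in>S. valid_shape \<Lambda>) \<and> B = lincomb S c \<and>
        r = (\<Sum>\<Lambda>\<in>S. \<phi> (c \<Lambda>) * conv_basis f g \<Lambda>))"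

definition c_linear_on_Mac2 :: "(complex \<Rightarrow> 'r::comm_ring_1) \<Rightarrow> (ps2 \<Rightarrow> 'r) \<Rightarrow> bool" where
  "c_linear_on_Mac2 \<phi> f \<longleftrightarrow>
     (\<forall>A\<in>Mac2. \<forall>B\<in>Mac2. f (\<lambda>m. A m + B m) = f A + f B) \<and>
     (\<forall>c. \<forall>A\<in>Mac2. f (\<lambda>m. c * A m) = \<phi> c * f A)"

definition ring_hom_C :: "(complex \<Rightarrow> 'r::comm_ring_1) \<Rightarrow> bool" where
  "ring_hom_C \<phi> \<longleftrightarrow> \<phi> 1 = 1 \<and> (\<forall>a b. \<phi> (a + b) = \<phi> a + \<phi> b) \<and> (\<forall>a b. \<phi> (a * b) = \<phi> a * \<phi> b)"

definition weighted_graph :: "'v set \<Rightarrow> 'v set set \<Rightarrow> ('v \<Rightarrow> nat) \<Rightarrow> bool" where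
  "weighted_graph V E wt \<longleftrightarrow> finite V \<and>
     (\<forall>e\<in>E. \<exists>u v. u \<noteq> v \<and> u \<in> V \<and> v \<in> V \<and> e = {u, v}) \<and>
     (\<forall>v\<in>V. 1 \<le> wt v)"

definition induced_edges :: "'v set set \<Rightarrow> 'v set \<Rightarrow> 'v set set" where
  "induced_edges E A = {e \<in> E. e \<subseteq> A}"

definition proper_colorings :: "'v set \<Rightarrow> 'v set set \<Rightarrow> ('v \<Rightarrow> nat) set" where
  "proper_colorings V E = {\<kappa>. (\<forall>v\<in>V. 1 \<le> \<kappa> v) \<and> (\<forall>v. v \<notin> V \<longrightarrow> \<kappa> v = 0) \<and>
      (\<forall>u\<in>V. \<forall>w\<in>V. {u, w} \<in> E \<longrightarrow> \<kappa> u \<noteq> \<kappa> w)}"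

text \<open>Coefficient of monomial m in X~_G = sum over proper kappa of prod_v x_kappa(v) y_kappa(v)^wt(v).\<close>
definition chromMac :: "'v set \<Rightarrow> 'v set set \<Rightarrow> ('v \<Rightarrow> nat) \<Rightarrow> ps2" where
  "chromMac V E wt m = of_nat (card {\<kappa> \<in> proper_colorings V E.
      \<forall>k. m k = (card {v \<in> V. \<kappa> v = k}, \<Sum>v\<in>{v \<in> V. \<kappa> v = k}. wt v)})"

end

theory Submission
  imports Defs "HOL-Library.Product_Plus" "HOL-Combinatorics.List_Permutation"
begin

text \<open>Expanding the product of power sums, the coefficient of a monomial in p_\<Lambda> counts the
  colorings of the parts of \<Lambda> that produce this monomial. For a graph, inclusion-exclusion over
  the sets F \<subseteq> E of monochromatic edges therefore gives Stanley's expansion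
  X_G = \<Sum>F\<subseteq>E. (-1)^|F| p_\<lambda>(F), where \<lambda>(F) lists size and weight of the connected components
  of (V, F). The p_\<Lambda> are linearly independent, so the convolution, defined through the
  p-expansion, is well defined, and on p_\<lambda>(F) it distributes the components of F in all ways over
  the two tensor factors. A set Q of components of (V, F) amounts to the vertex set A = \<Union>Q
  together with the edges F1 of F inside A and F2 inside V - A, and F = F1 \<union> F2. Regrouping
  the double sum by A therefore factors it into the expansions of X_G|A and X_G|(V - A).\<close>

section \<open>Colorings and their monomials\<close>

lemma sum_nat_pair_eq_0_iff:
  fixes s :: "'a \<Rightarrow> nat \<times> nat"
  assumes "finite A"
  shows "sum s A = 0 \<longleftrightarrow> (\<forall>x\<in>A. s x = 0)"
  using assms by (simp add: prod_eq_iff fst_sum snd_sum zero_prod_def ball_conj_distrib)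

lemma sum_pair_card_sum: "(\<Sum>v\<in>A. (1, wt v)) = (card A, sum wt A)"
  by (simp add: prod_eq_iff fst_sum snd_sum)

text \<open>For s i = (a_i, b_i), fibre_sum I s \<kappa> is the exponent vector of the monomial
  \<Prod>i\<in>I. x_(\<kappa> i)^a_i y_(\<kappa> i)^b_i; this is how pcoef and chromMac count colorings by monomial.\<close>

definition colorings :: "'a set \<Rightarrow> ('a \<Rightarrow> nat) set" where
  "colorings I = {\<kappa>. (\<forall>i\<in>I. 1 \<le> \<kappa> i) \<and> (\<forall>i. i \<notin> I \<longrightarrow> \<kappa> i = 0)}"

definition fibre_sum :: "'a set \<Rightarrow> ('a \<Rightarrow> 'b::comm_monoid_add) \<Rightarrow> ('a \<Rightarrow> 'c) \<Rightarrow> 'c \<Rightarrow> 'b" where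
  "fibre_sum I s \<kappa> k = (\<Sum>i\<in>{i\<in>I. \<kappa> i = k}. s i)"

lemma fibre_sum_cong:
  assumes "\<And>i. i \<in> I \<Longrightarrow> \<kappa> i = \<kappa>' i" and "\<And>i. i \<in> I \<Longrightarrow> s i = s' i"
  shows "fibre_sum I s \<kappa> = fibre_sum I s' \<kappa>'"
  unfolding fibre_sum_def using assms by (intro ext sum.cong) auto

lemma fibre_sum_inj_on:
  assumes "inj_on \<kappa> I" "i \<in> I"
  shows "fibre_sum I s \<kappa> (\<kappa> i) = s i"
proof -
  have "{j \<in> I. \<kappa> j = \<kappa> i} = {i}"
    using assms by (auto dest: inj_onD)
  then show ?thesis
    by (simp add: fibre_sum_def)
qed

lemma image_eq_support_fibre_sum:
  fixes s :: "'a \<Rightarrow> nat \<times> nat"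
  assumes "finite I" "\<forall>i\<in>I. s i \<noteq> 0"
  shows "\<kappa> ` I = {k. fibre_sum I s \<kappa> k \<noteq> 0}"
  using assms by (auto simp: fibre_sum_def sum_nat_pair_eq_0_iff)

lemma fibre_sum_comp:
  assumes "finite V"
  shows "fibre_sum V s (\<kappa> \<circ> \<pi>) = fibre_sum (\<pi> ` V) (fibre_sum V s \<pi>) \<kappa>"
proof
  fix k
  have "fibre_sum (\<pi> ` V) (fibre_sum V s \<pi>) \<kappa> k =
      (\<Sum>p\<in>{p \<in> \<pi> ` V. \<kappa> p = k}. \<Sum>v\<in>{v \<in> {v \<in> V. \<kappa> (\<pi> v) = k}. \<pi> v = p}. s v)"
    unfolding fibre_sum_def by (intro sum.cong) auto
  also have "\<dots> = fibre_sum V s (\<kappa> \<circ> \<pi>) k"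
    unfolding fibre_sum_def o_def using assms by (intro sum.group) auto
  finally show "fibre_sum V s (\<kappa> \<circ> \<pi>) k = fibre_sum (\<pi> ` V) (fibre_sum V s \<pi>) \<kappa> k" ..
qed

lemma finite_colorings_with_monomial:
  fixes s :: "'a \<Rightarrow> nat \<times> nat"
  assumes "finite I" "\<forall>i\<in>I. s i \<noteq> 0"
  shows "finite {\<kappa> \<in> colorings I. fibre_sum I s \<kappa> = m}"
proof (cases "{\<kappa> \<in> colorings I. fibre_sum I s \<kappa> = m} = {}")
  case False
  then obtain \<kappa>\<^sub>0 where "\<kappa>\<^sub>0 \<in> colorings I" "fibre_sum I s \<kappa>\<^sub>0 = m"
    by blast
  have "\<kappa> ` I = \<kappa>\<^sub>0 ` I" if "fibre_sum I s \<kappa> = m" for \<kappa>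
    using that \<open>fibre_sum I s \<kappa>\<^sub>0 = m\<close> by (simp add: image_eq_support_fibre_sum[OF assms])
  then have "{\<kappa> \<in> colorings I. fibre_sum I s \<kappa> = m} \<subseteq>
      {\<kappa>. \<forall>i. (i \<in> I \<longrightarrow> \<kappa> i \<in> \<kappa>\<^sub>0 ` I) \<and> (i \<notin> I \<longrightarrow> \<kappa> i = 0)}"
    by (auto simp: colorings_def)
  moreover have "finite {\<kappa>. \<forall>i. (i \<in> I \<longrightarrow> \<kappa> i \<in> \<kappa>\<^sub>0 ` I) \<and> (i \<notin> I \<longrightarrow> \<kappa> i = 0)}"
    using assms(1) by (intro finite_set_of_finite_funs) auto
  ultimately show ?thesis
    by (rule finite_subset)
qed (metis finite.emptyI)

lemma card_colorings_quotient:
  assumes "finite V"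
  shows "card {\<kappa> \<in> colorings (\<pi> ` V). fibre_sum (\<pi> ` V) (fibre_sum V s \<pi>) \<kappa> = m} =
    card {\<kappa> \<in> colorings V. (\<forall>u\<in>V. \<forall>w\<in>V. \<pi> u = \<pi> w \<longrightarrow> \<kappa> u = \<kappa> w) \<and> fibre_sum V s \<kappa> = m}"
    (is "card ?Q = card ?C")
proof (rule bij_betw_same_card)
  let ?lift = "\<lambda>\<kappa> v. if v \<in> V then \<kappa> (\<pi> v) else 0"
  let ?descend = "\<lambda>\<kappa> p. if p \<in> \<pi> ` V then \<kappa> (inv_into V \<pi> p) else 0"
  have lift_monomial: "fibre_sum V s (?lift \<kappa>) = fibre_sum (\<pi> ` V) (fibre_sum V s \<pi>) \<kappa>" for \<kappa>
    using fibre_sum_cong[of V "?lift \<kappa>" "\<kappa> \<circ> \<pi>" s s] fibre_sum_comp[OF assms] by simp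
  have descend_lift: "?descend (?lift \<kappa>) = \<kappa>" if "\<kappa> \<in> colorings (\<pi> ` V)" for \<kappa>
  proof
    fix p
    show "?descend (?lift \<kappa>) p = \<kappa> p"
      using that inv_into_into[of p \<pi> V] f_inv_into_f[of p \<pi> V] by (simp add: colorings_def)
  qed
  have lift_descend: "?lift (?descend \<kappa>) = \<kappa>" if "\<kappa> \<in> ?C" for \<kappa>
  proof
    fix v
    show "?lift (?descend \<kappa>) v = \<kappa> v"
    proof (cases "v \<in> V")
      case True
      have "\<kappa> (inv_into V \<pi> (\<pi> v)) = \<kappa> v"
        using that True inv_into_into[of "\<pi> v" \<pi> V] f_inv_into_f[of "\<pi> v" \<pi> V] by blast
      then show ?thesis
        using True by simp
    qed (use that in \<open>simp add: colorings_def\<close>)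
  qed
  have lift_into: "?lift \<kappa> \<in> ?C" if "\<kappa> \<in> ?Q" for \<kappa>
  proof -
    have "fibre_sum V s (?lift \<kappa>) = m"
      using that lift_monomial[of \<kappa>] by simp
    then show ?thesis
      using that by (simp add: colorings_def)
  qed
  have descend_into: "?descend \<kappa> \<in> ?Q" if "\<kappa> \<in> ?C" for \<kappa>
  proof -
    have "fibre_sum (\<pi> ` V) (fibre_sum V s \<pi>) (?descend \<kappa>) = m"
      using that lift_monomial[of "?descend \<kappa>"] lift_descend[OF that] by simp
    moreover have "?descend \<kappa> \<in> colorings (\<pi> ` V)"
      using that inv_into_into[of _ \<pi> V] by (simp add: colorings_def)
    ultimately show ?thesis
      by simp
  qed
  show "bij_betw ?lift ?Q ?C"
    by (rule bij_betw_byWitness[where f' = ?descend])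
      (use descend_lift lift_descend lift_into descend_into in blast)+
qed

section \<open>The power sum basis\<close>

lemma length_sorted_list_of_multiset [simp]: "length (sorted_list_of_multiset \<Lambda>) = size \<Lambda>"
  by (metis mset_sorted_list_of_multiset size_mset)

lemma mset_eq_image_mset_nth: "mset xs = image_mset ((!) xs) (mset_set {..<length xs})"
  by (metis map_nth mset_map mset_upt atLeast0LessThan)

lemma image_mset_sorted_list_of_multiset:
  "image_mset ((!) (sorted_list_of_multiset \<Lambda>)) (mset_set {..<size \<Lambda>}) = \<Lambda>"
  using mset_eq_image_mset_nth[of "sorted_list_of_multiset \<Lambda>"] by simp

lemma valid_shape_nth_nonzero:
  "valid_shape \<Lambda> \<Longrightarrow> i < size \<Lambda> \<Longrightarrow> sorted_list_of_multiset \<Lambda> ! i \<noteq> 0"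
  unfolding valid_shape_def zero_prod_def
  by (metis length_sorted_list_of_multiset nth_mem set_sorted_list_of_multiset)

lemma pcoef_eq_card_colorings:
  "pcoef \<Lambda> m = of_nat (card {\<kappa> \<in> colorings {..<size \<Lambda>}.
     fibre_sum {..<size \<Lambda>} ((!) (sorted_list_of_multiset \<Lambda>)) \<kappa> = m})"
proof -
  let ?xs = "sorted_list_of_multiset \<Lambda>"
  have "(\<forall>k. m k = ((\<Sum>i\<in>{i. i < size \<Lambda> \<and> \<kappa> i = k}. fst (?xs ! i)),
                     (\<Sum>i\<in>{i. i < size \<Lambda> \<and> \<kappa> i = k}. snd (?xs ! i)))) \<longleftrightarrow>
        fibre_sum {..<size \<Lambda>} ((!) ?xs) \<kappa> = m" for \<kappa>
    by (auto simp: fibre_sum_def fun_eq_iff prod_eq_iff fst_sum snd_sum)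
  then show ?thesis
    unfolding pcoef_def Let_def colorings_def by (simp add: not_less Ball_def)
qed

lemma mset_eq_image_mset_setE:
  assumes "finite I" "mset xs = image_mset s (mset_set I)"
  obtains \<tau> where "bij_betw \<tau> {..<length xs} I" "\<And>i. i < length xs \<Longrightarrow> xs ! i = s (\<tau> i)"
proof -
  obtain ps where ps: "distinct ps" "set ps = I"
    using finite_distinct_list[OF assms(1)] by blast
  then have "mset xs = mset (map s ps)"
    using assms(2) mset_set_set[OF ps(1)] by simp
  then obtain \<sigma> where \<sigma>: "bij_betw \<sigma> {..<length xs} {..<length ps}"
    "\<And>i. i < length xs \<Longrightarrow> xs ! i = map s ps ! \<sigma> i"
    using permutation_Ex_bij[of xs "map s ps"] by auto
  have "bij_betw ((!) ps \<circ> \<sigma>) {..<length xs} I"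
    using \<sigma>(1) bij_betw_nth[OF ps(1) refl ps(2)[symmetric]] by (rule bij_betw_trans)
  moreover have "xs ! i = s (((!) ps \<circ> \<sigma>) i)" if "i < length xs" for i
    using \<sigma> that bij_betwE[OF \<sigma>(1)] by simp
  ultimately show ?thesis
    using that by blast
qed

lemma pcoef_image_mset:
  assumes "finite I"
  shows "pcoef (image_mset s (mset_set I)) m = of_nat (card {\<kappa> \<in> colorings I. fibre_sum I s \<kappa> = m})"
proof -
  let ?\<Lambda> = "image_mset s (mset_set I)"
  let ?xs = "sorted_list_of_multiset ?\<Lambda>"
  let ?N = "{..<size ?\<Lambda>}"
  obtain \<tau> where \<tau>: "bij_betw \<tau> ?N I" "\<And>i. i < size ?\<Lambda> \<Longrightarrow> ?xs ! i = s (\<tau> i)"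
    using mset_eq_image_mset_setE[OF assms mset_sorted_list_of_multiset] by (metis length_sorted_list_of_multiset)
  have inj: "inj_on \<tau> ?N" and img: "\<tau> ` ?N = I"
    using \<tau>(1) by (auto simp: bij_betw_def)
  have "fibre_sum ?N ((!) ?xs) \<tau> p = s p" if p: "p \<in> I" for p
  proof -
    obtain i where "i < size ?\<Lambda>" "p = \<tau> i"
      using p img by auto
    then show ?thesis
      using fibre_sum_inj_on[OF inj, of i "(!) ?xs"] \<tau>(2) by simp
  qed
  then have "fibre_sum I s \<kappa> = fibre_sum I (fibre_sum ?N ((!) ?xs) \<tau>) \<kappa>" for \<kappa> :: "_ \<Rightarrow> nat"
    by (intro fibre_sum_cong) simp_all
  then have "card {\<kappa> \<in> colorings I. fibre_sum I s \<kappa> = m} =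
      card {\<kappa> \<in> colorings I. fibre_sum I (fibre_sum ?N ((!) ?xs) \<tau>) \<kappa> = m}"
    by (simp only:)
  also have "\<dots> = card {\<kappa> \<in> colorings ?N. (\<forall>u\<in>?N. \<forall>w\<in>?N. \<tau> u = \<tau> w \<longrightarrow> \<kappa> u = \<kappa> w) \<and>
                               fibre_sum ?N ((!) ?xs) \<kappa> = m}"
    using card_colorings_quotient[of ?N \<tau> "(!) ?xs" m, unfolded img] by simp
  also have "\<dots> = card {\<kappa> \<in> colorings ?N. fibre_sum ?N ((!) ?xs) \<kappa> = m}"
    using inj by (auto dest: inj_onD intro!: arg_cong[where f = card])
  finally show ?thesis
    by (simp add: pcoef_eq_card_colorings)
qed

lemma fibre_sum_eq_imp_image_mset_eq:
  fixes s t :: "_ \<Rightarrow> nat \<times> nat"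
  assumes fin: "finite I" "finite J" and inj: "inj_on \<sigma> I"
    and nz: "\<forall>i\<in>I. s i \<noteq> 0" "\<forall>j\<in>J. t j \<noteq> 0" and le: "card J \<le> card I"
    and eq: "fibre_sum J t \<kappa> = fibre_sum I s \<sigma>"
  shows "image_mset t (mset_set J) = image_mset s (mset_set I)"
proof -
  have img: "\<kappa> ` J = \<sigma> ` I"
    unfolding image_eq_support_fibre_sum[OF fin(1) nz(1)] image_eq_support_fibre_sum[OF fin(2) nz(2)] eq ..
  have "card J \<le> card (\<kappa> ` J)"
    using le img card_image[OF inj] by simp
  then have inj_\<kappa>: "inj_on \<kappa> J"
    using fin(2) card_image_le[OF fin(2), of \<kappa>] by (simp add: eq_card_imp_inj_on)
  define \<rho> where "\<rho> = the_inv_into I \<sigma> \<circ> \<kappa>"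
  have \<rho>_img: "\<rho> ` J = I"
    unfolding \<rho>_def image_comp[symmetric] img using inj by simp
  have "inj_on \<rho> J"
    unfolding \<rho>_def using inj_\<kappa> inj_on_the_inv_into[OF inj] img by (intro comp_inj_on) simp_all
  moreover have "t j = s (\<rho> j)" if "j \<in> J" for j
  proof -
    have \<sigma>\<rho>: "\<sigma> (\<rho> j) = \<kappa> j" "\<rho> j \<in> I"
      using that img f_the_inv_into_f[OF inj] the_inv_into_into[OF inj _ order_refl]
      unfolding \<rho>_def by auto
    have "t j = fibre_sum J t \<kappa> (\<kappa> j)"
      by (rule fibre_sum_inj_on[OF inj_\<kappa> that, symmetric])
    also have "\<dots> = fibre_sum I s \<sigma> (\<sigma> (\<rho> j))"
      using eq \<sigma>\<rho> by simp
    also have "\<dots> = s (\<rho> j)"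
      using fibre_sum_inj_on[OF inj \<sigma>\<rho>(2)] .
    finally show ?thesis .
  qed
  ultimately have "image_mset t (mset_set J) = image_mset s (image_mset \<rho> (mset_set J))"
    unfolding image_mset.compositionality using fin(2) by (auto intro: image_mset_cong)
  also have "\<dots> = image_mset s (mset_set I)"
    using image_mset_mset_set[OF \<open>inj_on \<rho> J\<close>] \<rho>_img by simp
  finally show ?thesis .
qed

text \<open>The monomial x_1^a_1 y_1^b_1 \<cdots> x_l^a_l y_l^b_l of the sorted parts (a_i, b_i) of \<Lambda>;
  ordered by number of parts, the p_\<Lambda> are triangular with respect to these monomials.\<close>

definition separated_monomial :: "(nat \<times> nat) multiset \<Rightarrow> mono2" where
  "separated_monomial \<Lambda> = fibre_sum {..<size \<Lambda>} ((!) (sorted_list_of_multiset \<Lambda>)) Suc"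

lemma pcoef_separated_monomial_nonzero:
  assumes "valid_shape \<Lambda>"
  shows "pcoef \<Lambda> (separated_monomial \<Lambda>) \<noteq> 0"
proof -
  let ?N = "{..<size \<Lambda>}" and ?s = "(!) (sorted_list_of_multiset \<Lambda>)"
  let ?K = "{\<kappa> \<in> colorings ?N. fibre_sum ?N ?s \<kappa> = separated_monomial \<Lambda>}"
  have "(\<lambda>i. if i < size \<Lambda> then Suc i else 0) \<in> ?K"
    unfolding separated_monomial_def colorings_def by (auto intro: fibre_sum_cong)
  moreover have "finite ?K"
    using valid_shape_nth_nonzero[OF assms] by (intro finite_colorings_with_monomial) auto
  ultimately have "card ?K \<noteq> 0"
    by auto
  then show ?thesis
    by (simp add: pcoef_eq_card_colorings)
qed

lemma pcoef_separated_monomial_eq_0: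
  assumes "valid_shape \<Lambda>" "valid_shape \<Lambda>'" "size \<Lambda>' \<le> size \<Lambda>" "\<Lambda>' \<noteq> \<Lambda>"
  shows "pcoef \<Lambda>' (separated_monomial \<Lambda>) = 0"
proof -
  let ?N = "{..<size \<Lambda>}" and ?s = "(!) (sorted_list_of_multiset \<Lambda>)"
  let ?N' = "{..<size \<Lambda>'}" and ?s' = "(!) (sorted_list_of_multiset \<Lambda>')"
  have "fibre_sum ?N' ?s' \<kappa> \<noteq> fibre_sum ?N ?s Suc" for \<kappa>
  proof
    assume "fibre_sum ?N' ?s' \<kappa> = fibre_sum ?N ?s Suc"
    then have "image_mset ?s' (mset_set ?N') = image_mset ?s (mset_set ?N)"
      using assms(3) valid_shape_nth_nonzero[OF assms(1)] valid_shape_nth_nonzero[OF assms(2)]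
      by (intro fibre_sum_eq_imp_image_mset_eq) auto
    then show False
      using assms(4) by (simp add: image_mset_sorted_list_of_multiset)
  qed
  then show ?thesis
    by (simp add: pcoef_eq_card_colorings separated_monomial_def)
qed

lemma pcoef_linear_independent:
  assumes "finite S" "\<forall>\<Lambda>\<in>S. valid_shape \<Lambda>" "lincomb S c = (\<lambda>_. 0)"
  shows "\<forall>\<Lambda>\<in>S. c \<Lambda> = 0"
proof (rule ccontr)
  let ?T = "{\<Lambda> \<in> S. c \<Lambda> \<noteq> 0}"
  assume "\<not> (\<forall>\<Lambda>\<in>S. c \<Lambda> = 0)"
  then have "size ` ?T \<noteq> {}" "finite (size ` ?T)"
    using assms(1) by auto
  then have "Max (size ` ?T) \<in> size ` ?T"
    by (intro Max_in)
  then obtain \<Lambda>\<^sub>0 where \<Lambda>\<^sub>0: "\<Lambda>\<^sub>0 \<in> ?T" "size \<Lambda>\<^sub>0 = Max (size ` ?T)"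
    by (metis (no_types, lifting) imageE)
  let ?m = "separated_monomial \<Lambda>\<^sub>0"
  have others: "c \<Lambda> * pcoef \<Lambda> ?m = 0" if "\<Lambda> \<in> S - {\<Lambda>\<^sub>0}" for \<Lambda>
  proof (cases "c \<Lambda> = 0")
    case False
    then have "size \<Lambda> \<le> size \<Lambda>\<^sub>0"
      unfolding \<Lambda>\<^sub>0(2) using that assms(1) by (intro Max_ge) auto
    then show ?thesis
      using that assms(2) \<Lambda>\<^sub>0(1) pcoef_separated_monomial_eq_0 by simp
  qed simp
  have "lincomb S c ?m = c \<Lambda>\<^sub>0 * pcoef \<Lambda>\<^sub>0 ?m + (\<Sum>\<Lambda>\<in>S - {\<Lambda>\<^sub>0}. c \<Lambda> * pcoef \<Lambda> ?m)"
    unfolding lincomb_def using assms(1) \<Lambda>\<^sub>0(1) by (intro sum.remove) auto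
  also have "\<dots> = c \<Lambda>\<^sub>0 * pcoef \<Lambda>\<^sub>0 ?m"
    using others by (simp add: sum.neutral)
  finally have "c \<Lambda>\<^sub>0 * pcoef \<Lambda>\<^sub>0 ?m = 0"
    using assms(3) by simp
  moreover have "c \<Lambda>\<^sub>0 * pcoef \<Lambda>\<^sub>0 ?m \<noteq> 0"
    using \<Lambda>\<^sub>0(1) assms(2) pcoef_separated_monomial_nonzero by simp
  ultimately show False
    by contradiction
qed

section \<open>Linear maps and the convolution\<close>

lemma ring_hom_C_0: "ring_hom_C \<phi> \<Longrightarrow> \<phi> 0 = 0"
  unfolding ring_hom_C_def by (metis add_cancel_right_right)

lemma ring_hom_C_sum: "ring_hom_C \<phi> \<Longrightarrow> \<phi> (sum h S) = (\<Sum>x\<in>S. \<phi> (h x))"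
  by (induction S rule: infinite_finite_induct) (auto simp: ring_hom_C_0 ring_hom_C_def)

lemma ring_hom_C_neg_one_power: "ring_hom_C \<phi> \<Longrightarrow> \<phi> ((-1) ^ n) = (-1) ^ n"
proof (induction n)
  case (Suc n)
  have "\<phi> (-1) + \<phi> 1 = 0"
    using Suc.prems ring_hom_C_0 unfolding ring_hom_C_def by (metis add.left_inverse)
  then have "\<phi> (-1) = -1"
    using Suc.prems unfolding ring_hom_C_def by (simp add: eq_neg_iff_add_eq_0)
  moreover have "\<phi> ((-1) ^ Suc n) = \<phi> (-1) * \<phi> ((-1) ^ n)"
    using Suc.prems unfolding ring_hom_C_def power_Suc by blast
  ultimately show ?case
    using Suc by simp
qed (simp add: ring_hom_C_def)

lemma lincomb_in_Mac2: "finite S \<Longrightarrow> \<forall>\<Lambda>\<in>S. valid_shape \<Lambda> \<Longrightarrow> lincomb S c \<in> Mac2"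
  unfolding Mac2_def by blast

lemma pcoef_in_Mac2: "valid_shape \<Lambda> \<Longrightarrow> pcoef \<Lambda> \<in> Mac2"
  using lincomb_in_Mac2[of "{\<Lambda>}" "\<lambda>_. 1"] by (simp add: lincomb_def)

lemma lincomb_extend:
  "finite U \<Longrightarrow> S \<subseteq> U \<Longrightarrow> lincomb S c = lincomb U (\<lambda>\<Lambda>. if \<Lambda> \<in> S then c \<Lambda> else 0)"
  unfolding lincomb_def by (intro ext sum.mono_neutral_cong_left) auto

lemma Mac2_add:
  assumes "A \<in> Mac2" "B \<in> Mac2"
  shows "(\<lambda>m. A m + B m) \<in> Mac2"
proof -
  obtain S1 c1 S2 c2 where S: "finite S1" "\<forall>\<Lambda>\<in>S1. valid_shape \<Lambda>" "A = lincomb S1 c1"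
    "finite S2" "\<forall>\<Lambda>\<in>S2. valid_shape \<Lambda>" "B = lincomb S2 c2"
    using assms unfolding Mac2_def by blast
  let ?c = "\<lambda>\<Lambda>. (if \<Lambda> \<in> S1 then c1 \<Lambda> else 0) + (if \<Lambda> \<in> S2 then c2 \<Lambda> else 0)"
  have "(\<lambda>m. A m + B m) = lincomb (S1 \<union> S2) ?c"
    using lincomb_extend[of "S1 \<union> S2" S1 c1] lincomb_extend[of "S1 \<union> S2" S2 c2] S
    by (simp add: lincomb_def sum.distrib distrib_right)
  then show ?thesis
    using S by (auto intro!: lincomb_in_Mac2)
qed

lemma Mac2_smult:
  assumes "A \<in> Mac2"
  shows "(\<lambda>m. a * A m) \<in> Mac2"
proof -
  obtain S c where S: "finite S" "\<forall>\<Lambda>\<in>S. valid_shape \<Lambda>" "A = lincomb S c"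
    using assms unfolding Mac2_def by blast
  then have "(\<lambda>m. a * A m) = lincomb S (\<lambda>\<Lambda>. a * c \<Lambda>)"
    by (simp add: lincomb_def sum_distrib_left mult.assoc)
  then show ?thesis
    using S lincomb_in_Mac2 by simp
qed

lemma Mac2_sum:
  "finite I \<Longrightarrow> \<forall>i\<in>I. B i \<in> Mac2 \<Longrightarrow> (\<lambda>m. \<Sum>i\<in>I. a i * B i m) \<in> Mac2"
proof (induction I rule: finite_induct)
  case empty
  show ?case
    using lincomb_in_Mac2[of "{}"] by (simp add: lincomb_def)
qed (simp add: Mac2_add Mac2_smult)

lemma c_linear_on_Mac2_sum:
  assumes "ring_hom_C \<phi>" "c_linear_on_Mac2 \<phi> f"
  shows "finite I \<Longrightarrow> \<forall>i\<in>I. B i \<in> Mac2 \<Longrightarrow> f (\<lambda>m. \<Sum>i\<in>I. a i * B i m) = (\<Sum>i\<in>I. \<phi> (a i) * f (B i))"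
proof (induction I rule: finite_induct)
  case empty
  have "f (\<lambda>m. 0 * A m) = \<phi> 0 * f A" if "A \<in> Mac2" for A
    using assms(2) that unfolding c_linear_on_Mac2_def by blast
  from this[of "\<lambda>m. 0"] have "f (\<lambda>m. 0) = \<phi> 0 * f (\<lambda>m. 0)"
    using Mac2_sum[of "{}"] by simp
  then show ?case
    using ring_hom_C_0[OF assms(1)] by simp
next
  case (insert x I)
  then show ?case
    using assms(2) Mac2_smult Mac2_sum[of I B a] unfolding c_linear_on_Mac2_def by simp
qed

lemma lincomb_eq_imp_sum_eq:
  assumes "ring_hom_C \<phi>"
    and "finite S1" "\<forall>\<Lambda>\<in>S1. valid_shape \<Lambda>" "finite S2" "\<forall>\<Lambda>\<in>S2. valid_shape \<Lambda>"
    and "lincomb S1 c1 = lincomb S2 c2"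
  shows "(\<Sum>\<Lambda>\<in>S1. \<phi> (c1 \<Lambda>) * X \<Lambda>) = (\<Sum>\<Lambda>\<in>S2. \<phi> (c2 \<Lambda>) * X \<Lambda>)"
proof -
  let ?U = "S1 \<union> S2"
  define d1 where "d1 = (\<lambda>\<Lambda>. if \<Lambda> \<in> S1 then c1 \<Lambda> else 0)"
  define d2 where "d2 = (\<lambda>\<Lambda>. if \<Lambda> \<in> S2 then c2 \<Lambda> else 0)"
  have "lincomb ?U d1 = lincomb ?U d2"
    using assms(2,4,6) lincomb_extend[of ?U S1 c1] lincomb_extend[of ?U S2 c2] by (simp add: d1_def d2_def)
  then have "lincomb ?U (\<lambda>\<Lambda>. d1 \<Lambda> - d2 \<Lambda>) = (\<lambda>_. 0)"
    by (simp add: lincomb_def fun_eq_iff left_diff_distrib sum_subtractf)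
  then have "\<forall>\<Lambda>\<in>?U. d1 \<Lambda> - d2 \<Lambda> = 0"
    using assms(2-5) by (intro pcoef_linear_independent) auto
  then have d: "\<forall>\<Lambda>\<in>?U. d1 \<Lambda> = d2 \<Lambda>"
    by simp
  have "(\<Sum>\<Lambda>\<in>S1. \<phi> (c1 \<Lambda>) * X \<Lambda>) = (\<Sum>\<Lambda>\<in>?U. \<phi> (d1 \<Lambda>) * X \<Lambda>)"
    unfolding d1_def using assms(2,4) ring_hom_C_0[OF assms(1)] by (intro sum.mono_neutral_cong_left) auto
  also have "\<dots> = (\<Sum>\<Lambda>\<in>?U. \<phi> (d2 \<Lambda>) * X \<Lambda>)"
    using d by simp
  also have "\<dots> = (\<Sum>\<Lambda>\<in>S2. \<phi> (c2 \<Lambda>) * X \<Lambda>)"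
    unfolding d2_def using assms(2,4) ring_hom_C_0[OF assms(1)] by (intro sum.mono_neutral_cong_right) auto
  finally show ?thesis .
qed

text \<open>\<^const>\<open>conv\<close> evaluates an arbitrary representation chosen by SOME; by
  linear independence all representations give the same value.\<close>

lemma conv_lincomb:
  assumes "ring_hom_C \<phi>" "finite S" "\<forall>\<Lambda>\<in>S. valid_shape \<Lambda>"
  shows "conv \<phi> f g (lincomb S c) = (\<Sum>\<Lambda>\<in>S. \<phi> (c \<Lambda>) * conv_basis f g \<Lambda>)"
proof -
  let ?P = "\<lambda>r. \<exists>S' c'. finite S' \<and> (\<forall>\<Lambda>\<in>S'. valid_shape \<Lambda>) \<and> lincomb S c = lincomb S' c' \<and>
      r = (\<Sum>\<Lambda>\<in>S'. \<phi> (c' \<Lambda>) * conv_basis f g \<Lambda>)"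
  have "?P (\<Sum>\<Lambda>\<in>S. \<phi> (c \<Lambda>) * conv_basis f g \<Lambda>)"
    using assms(2,3) by blast
  then have "?P (conv \<phi> f g (lincomb S c))"
    unfolding conv_def by (rule someI)
  then obtain S' c' where S': "finite S'" "\<forall>\<Lambda>\<in>S'. valid_shape \<Lambda>" "lincomb S' c' = lincomb S c"
    and conv_eq: "conv \<phi> f g (lincomb S c) = (\<Sum>\<Lambda>\<in>S'. \<phi> (c' \<Lambda>) * conv_basis f g \<Lambda>)"
    by metis
  show ?thesis
    unfolding conv_eq by (rule lincomb_eq_imp_sum_eq[OF assms(1) S'(1,2) assms(2,3) S'(3)])
qed

lemma conv_sum:
  assumes "ring_hom_C \<phi>" "finite I" "\<forall>i\<in>I. valid_shape (\<Lambda> i)"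
  shows "conv \<phi> f g (\<lambda>m. \<Sum>i\<in>I. a i * pcoef (\<Lambda> i) m) = (\<Sum>i\<in>I. \<phi> (a i) * conv_basis f g (\<Lambda> i))"
proof -
  define c where "c \<Lambda>' = (\<Sum>i\<in>{i \<in> I. \<Lambda> i = \<Lambda>'}. a i)" for \<Lambda>'
  have "(\<lambda>m. \<Sum>i\<in>I. a i * pcoef (\<Lambda> i) m) = lincomb (\<Lambda> ` I) c"
  proof
    fix m
    have "lincomb (\<Lambda> ` I) c m = (\<Sum>\<Lambda>'\<in>\<Lambda> ` I. \<Sum>i\<in>{i \<in> I. \<Lambda> i = \<Lambda>'}. a i * pcoef (\<Lambda> i) m)"
      unfolding lincomb_def c_def sum_distrib_right by (intro sum.cong) auto
    also have "\<dots> = (\<Sum>i\<in>I. a i * pcoef (\<Lambda> i) m)"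
      using assms(2) by (intro sum.group) auto
    finally show "(\<Sum>i\<in>I. a i * pcoef (\<Lambda> i) m) = lincomb (\<Lambda> ` I) c m" ..
  qed
  then have "conv \<phi> f g (\<lambda>m. \<Sum>i\<in>I. a i * pcoef (\<Lambda> i) m) = (\<Sum>\<Lambda>'\<in>\<Lambda> ` I. \<phi> (c \<Lambda>') * conv_basis f g \<Lambda>')"
    using conv_lincomb[OF assms(1)] assms(2,3) by simp
  also have "\<dots> = (\<Sum>\<Lambda>'\<in>\<Lambda> ` I. \<Sum>i\<in>{i \<in> I. \<Lambda> i = \<Lambda>'}. \<phi> (a i) * conv_basis f g (\<Lambda> i))"
    unfolding c_def ring_hom_C_sum[OF assms(1)] sum_distrib_right by (intro sum.cong) auto
  also have "\<dots> = (\<Sum>i\<in>I. \<phi> (a i) * conv_basis f g (\<Lambda> i))"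
    using assms(2) by (intro sum.group) auto
  finally show ?thesis .
qed

lemma nths_conv_map_filter: "nths xs J = map ((!) xs) (filter (\<lambda>i. i \<in> J) [0..<length xs])"
  unfolding nths_def
  by (induction xs rule: rev_induct) (auto simp: nth_append)

lemma mset_nths: "mset (nths xs J) = image_mset ((!) xs) (mset_set {i \<in> {..<length xs}. i \<in> J})"
  by (simp add: nths_conv_map_filter mset_filter atLeast0LessThan)

lemma conv_basis_image_mset:
  assumes "finite P"
  shows "conv_basis f g (image_mset h (mset_set P)) =
    (\<Sum>Q\<in>Pow P. f (pcoef (image_mset h (mset_set Q))) * g (pcoef (image_mset h (mset_set (P - Q)))))"
proof -
  let ?\<Lambda> = "image_mset h (mset_set P)"
  let ?xs = "sorted_list_of_multiset ?\<Lambda>"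
  let ?N = "{..<size ?\<Lambda>}"
  obtain \<tau> where \<tau>: "bij_betw \<tau> ?N P" "\<And>i. i < size ?\<Lambda> \<Longrightarrow> ?xs ! i = h (\<tau> i)"
    using mset_eq_image_mset_setE[OF assms mset_sorted_list_of_multiset] by (metis length_sorted_list_of_multiset)
  have inj: "inj_on \<tau> ?N"
    using \<tau>(1) by (rule bij_betw_imp_inj_on)
  have nths_eq: "mset (nths ?xs J) = image_mset h (mset_set (\<tau> ` J))" if "J \<subseteq> ?N" for J
  proof -
    have "{i \<in> ?N. i \<in> J} = J"
      using that by auto
    then have "mset (nths ?xs J) = image_mset ((!) ?xs) (mset_set J)"
      by (simp add: mset_nths)
    also have "\<dots> = image_mset h (image_mset \<tau> (mset_set J))"
      unfolding image_mset.compositionality using that finite_subset[OF that]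
      by (auto intro!: image_mset_cong simp: \<tau>(2))
    also have "image_mset \<tau> (mset_set J) = mset_set (\<tau> ` J)"
      using inj_on_subset[OF inj that] by (rule image_mset_mset_set)
    finally show ?thesis .
  qed
  have compl: "\<tau> ` (?N - J) = P - \<tau> ` J" if "J \<subseteq> ?N" for J
    using inj_on_image_set_diff[OF inj _ that] \<tau>(1) by (simp add: bij_betw_def)
  have "conv_basis f g ?\<Lambda> = (\<Sum>J\<in>Pow ?N. f (pcoef (image_mset h (mset_set (\<tau> ` J)))) *
                                       g (pcoef (image_mset h (mset_set (P - \<tau> ` J)))))"
    unfolding conv_basis_def Let_def length_sorted_list_of_multiset atLeast0LessThan
    using nths_eq compl by (intro sum.cong) auto
  also have "\<dots> = (\<Sum>Q\<in>Pow P. f (pcoef (image_mset h (mset_set Q))) * g (pcoef (image_mset h (mset_set (P - Q)))))"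
    using bij_betw_image_Pow[OF \<tau>(1)] by (rule sum.reindex_bij_betw)
  finally show ?thesis .
qed

section \<open>Connected components\<close>

definition edge_rel :: "'v set set \<Rightarrow> 'v rel" where
  "edge_rel F = {(u, w). \<exists>e\<in>F. u \<in> e \<and> w \<in> e}"

definition component :: "'v set set \<Rightarrow> 'v \<Rightarrow> 'v set" where
  "component F v = (edge_rel F)\<^sup>* `` {v}"

definition components :: "'v set \<Rightarrow> 'v set set \<Rightarrow> 'v set set" where
  "components V F = component F ` V"

definition monochromatic :: "('v \<Rightarrow> nat) \<Rightarrow> 'v set \<Rightarrow> bool" where
  "monochromatic \<kappa> e \<longleftrightarrow> (\<forall>u\<in>e. \<forall>w\<in>e. \<kappa> u = \<kappa> w)"

lemma component_eq_iff: "component F u = component F w \<longleftrightarrow> w \<in> component F u"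
proof -
  have "sym (edge_rel F)"
    unfolding edge_rel_def sym_def by blast
  then have "equiv UNIV ((edge_rel F)\<^sup>*)"
    by (intro equivI refl_rtrancl sym_rtrancl trans_rtrancl) auto
  then show ?thesis
    unfolding component_def by (simp add: eq_equiv_class_iff)
qed

lemma in_component_self: "v \<in> component F v"
  by (simp add: component_def)

lemma edge_subset_component: "e \<in> F \<Longrightarrow> u \<in> e \<Longrightarrow> e \<subseteq> component F u"
  unfolding component_def edge_rel_def by (auto intro: r_into_rtrancl)

lemma component_subset:
  assumes "\<Union>F \<subseteq> V" "v \<in> V"
  shows "component F v \<subseteq> V"
proof
  fix w
  assume "w \<in> component F v"
  then have "(v, w) \<in> (edge_rel F)\<^sup>*"
    by (simp add: component_def)
  then show "w \<in> V"
    by (induction rule: rtrancl_induct) (use assms in \<open>auto simp: edge_rel_def\<close>)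
qed

lemma Union_components:
  assumes "\<Union>F \<subseteq> V"
  shows "\<Union>(components V F) = V"
proof
  show "\<Union>(components V F) \<subseteq> V"
    unfolding components_def using component_subset[OF assms] by auto
  show "V \<subseteq> \<Union>(components V F)"
    unfolding components_def by (blast intro: in_component_self)
qed

lemma components_nonempty: "B \<in> components V F \<Longrightarrow> B \<noteq> {}"
  unfolding components_def using in_component_self by (metis empty_iff imageE)

lemma components_subset:
  assumes "\<Union>F \<subseteq> V" "B \<in> components V F"
  shows "B \<subseteq> V"
proof -
  obtain v where "v \<in> V" "B = component F v"
    using assms(2) unfolding components_def by auto
  then show ?thesis
    using component_subset[OF assms(1)] by simp
qed

lemma component_eq_of_mem:
  assumes "B \<in> components V F" "v \<in> B"
  shows "component F v = B"
proof -
  obtain w where "B = component F w"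
    using assms(1) unfolding components_def by auto
  then show ?thesis
    using assms(2) component_eq_iff by metis
qed

lemma component_Un:
  assumes "\<Union>F \<subseteq> A" "\<Union>G \<inter> A = {}" "v \<in> A"
  shows "component (F \<union> G) v = component F v"
proof
  have "(v, w) \<in> (edge_rel F)\<^sup>* \<and> w \<in> A" if "(v, w) \<in> (edge_rel (F \<union> G))\<^sup>*" for w
    using that
  proof (induction rule: rtrancl_induct)
    case (step y z)
    then have "(y, z) \<in> edge_rel F" "z \<in> A"
      using assms(1,2) unfolding edge_rel_def by auto
    then show ?case
      using step.IH by (meson rtrancl.rtrancl_into_rtrancl)
  qed (use assms(3) in simp)
  then show "component (F \<union> G) v \<subseteq> component F v"
    unfolding component_def by blast
  have "edge_rel F \<subseteq> edge_rel (F \<union> G)"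
    unfolding edge_rel_def by blast
  then show "component F v \<subseteq> component (F \<union> G) v"
    unfolding component_def by (meson Image_mono rtrancl_mono subset_refl)
qed

lemma components_Un:
  assumes "A \<subseteq> V" "\<Union>F \<subseteq> A" "\<Union>G \<subseteq> V - A"
  shows "components V (F \<union> G) = components A F \<union> components (V - A) G"
proof -
  have "components V (F \<union> G) = component (F \<union> G) ` A \<union> component (G \<union> F) ` (V - A)"
    unfolding components_def using assms(1) by (metis Un_Diff_cancel Un_absorb2 Un_commute image_Un)
  also have "\<dots> = components A F \<union> components (V - A) G"
    unfolding components_def using assms by (intro arg_cong2[where f = "(\<union>)"] image_cong component_Un) auto
  finally show ?thesis .
qed

lemma component_image_Union:
  assumes "Q \<subseteq> components V F"
  shows "component F ` \<Union>Q = Q"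
proof
  show "component F ` \<Union>Q \<subseteq> Q"
  proof
    fix C
    assume "C \<in> component F ` \<Union>Q"
    then obtain B v where "B \<in> Q" "v \<in> B" "C = component F v"
      by auto
    then show "C \<in> Q"
      using assms component_eq_of_mem[of B V F v] by auto
  qed
  show "Q \<subseteq> component F ` \<Union>Q"
  proof
    fix B
    assume B: "B \<in> Q"
    then obtain w where "B = component F w"
      using assms unfolding components_def by auto
    then show "B \<in> component F ` \<Union>Q"
      using B by (metis UnionI imageI in_component_self)
  qed
qed

lemma edge_inside_or_outside_components:
  assumes "Q \<subseteq> components V F" "e \<in> F"
  shows "e \<subseteq> \<Union>Q \<or> e \<inter> \<Union>Q = {}"
proof (rule disjCI)
  assume "e \<inter> \<Union>Q \<noteq> {}"
  then obtain u B where "u \<in> e" "B \<in> Q" "u \<in> B"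
    by blast
  then have "e \<subseteq> B"
    using assms component_eq_of_mem[of B V F u] edge_subset_component[of e F u] by auto
  then show "e \<subseteq> \<Union>Q"
    using \<open>B \<in> Q\<close> by blast
qed

lemma constant_on_components_iff:
  assumes "\<Union>F \<subseteq> V"
  shows "(\<forall>u\<in>V. \<forall>w\<in>V. component F u = component F w \<longrightarrow> \<kappa> u = \<kappa> w) \<longleftrightarrow> (\<forall>e\<in>F. monochromatic \<kappa> e)"
proof
  assume const: "\<forall>u\<in>V. \<forall>w\<in>V. component F u = component F w \<longrightarrow> \<kappa> u = \<kappa> w"
  show "\<forall>e\<in>F. monochromatic \<kappa> e"
    unfolding monochromatic_def
  proof (intro ballI)
    fix e u w
    assume "e \<in> F" "u \<in> e" "w \<in> e"
    then have "u \<in> V" "w \<in> V" "component F u = component F w"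
      using assms edge_subset_component[of e F u] by (auto simp: component_eq_iff)
    then show "\<kappa> u = \<kappa> w"
      using const by blast
  qed
next
  assume mono: "\<forall>e\<in>F. monochromatic \<kappa> e"
  have "\<kappa> u = \<kappa> w" if "(u, w) \<in> (edge_rel F)\<^sup>*" for u w
    using that
  proof (induction rule: rtrancl_induct)
    case (step y z)
    then show ?case
      using mono unfolding edge_rel_def monochromatic_def by auto
  qed simp
  then show "\<forall>u\<in>V. \<forall>w\<in>V. component F u = component F w \<longrightarrow> \<kappa> u = \<kappa> w"
    unfolding component_eq_iff by (simp add: component_def)
qed

section \<open>Stanley's expansion\<close>

definition shape :: "('v \<Rightarrow> nat) \<Rightarrow> 'v set set \<Rightarrow> (nat \<times> nat) multiset" where
  "shape wt P = image_mset (\<lambda>B. (card B, sum wt B)) (mset_set P)"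

lemma valid_shape_components:
  assumes "finite V" "\<Union>F \<subseteq> V"
  shows "valid_shape (shape wt (components V F))"
  unfolding valid_shape_def shape_def
proof
  assume "(0, 0) \<in># image_mset (\<lambda>B. (card B, sum wt B)) (mset_set (components V F))"
  then obtain B where "B \<in># mset_set (components V F)" "card B = 0"
    by auto
  moreover have "finite (components V F)"
    using assms(1) by (simp add: components_def)
  moreover have "finite B" "B \<noteq> {}" if "B \<in> components V F" for B
    using that assms components_nonempty components_subset finite_subset by metis+
  ultimately show False
    by simp
qed

lemma pcoef_shape_components:
  assumes "finite V" "\<Union>F \<subseteq> V"
  shows "pcoef (shape wt (components V F)) m =
    of_nat (card {\<kappa> \<in> colorings V. (\<forall>e\<in>F. monochromatic \<kappa> e) \<and> fibre_sum V (\<lambda>v. (1, wt v)) \<kappa> = m})"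
proof -
  let ?s = "\<lambda>v. (1, wt v)" and ?\<pi> = "component F"
  have "fibre_sum V ?s ?\<pi> B = (card B, sum wt B)" if "B \<in> components V F" for B
  proof -
    have "{v \<in> V. ?\<pi> v = B} = B"
      using component_eq_of_mem[OF that] components_subset[OF assms(2) that]
        in_component_self[of _ F] by auto
    then show ?thesis
      unfolding fibre_sum_def using sum_pair_card_sum[of wt B] by simp
  qed
  then have "shape wt (components V F) = image_mset (fibre_sum V ?s ?\<pi>) (mset_set (?\<pi> ` V))"
    unfolding shape_def components_def using assms(1) by (intro image_mset_cong) simp_all
  then have "pcoef (shape wt (components V F)) m =
      of_nat (card {\<kappa> \<in> colorings (?\<pi> ` V). fibre_sum (?\<pi> ` V) (fibre_sum V ?s ?\<pi>) \<kappa> = m})"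
    using assms(1) by (simp only: pcoef_image_mset finite_imageI)
  also have "\<dots> = of_nat (card {\<kappa> \<in> colorings V.
      (\<forall>u\<in>V. \<forall>w\<in>V. ?\<pi> u = ?\<pi> w \<longrightarrow> \<kappa> u = \<kappa> w) \<and> fibre_sum V ?s \<kappa> = m})"
    by (simp only: card_colorings_quotient[OF assms(1)])
  finally show ?thesis
    by (simp only: constant_on_components_iff[OF assms(2)])
qed

lemma conv_basis_shape:
  "finite P \<Longrightarrow> conv_basis f g (shape wt P) =
    (\<Sum>Q\<in>Pow P. f (pcoef (shape wt Q)) * g (pcoef (shape wt (P - Q))))"
  unfolding shape_def by (rule conv_basis_image_mset)

lemma sum_Pow_neg_one_power:
  assumes "finite A"
  shows "(\<Sum>X\<in>Pow A. (-1::'a::comm_ring_1) ^ card X) = (if A = {} then 1 else 0)"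
  using prod_diff_conv_sum[OF assms, of "\<lambda>_. 1" "\<lambda>_. 1 :: 'a"] assms by (simp add: power_0_left)

lemma card_sieve:
  assumes "finite C" "finite E"
  shows "(of_nat (card {x \<in> C. \<forall>e\<in>E. \<not> P x e}) :: 'a::comm_ring_1) =
    (\<Sum>F\<in>Pow E. (-1) ^ card F * of_nat (card {x \<in> C. \<forall>e\<in>F. P x e}))"
proof -
  let ?M = "\<lambda>x. {e \<in> E. P x e}"
  have "of_nat (card {x \<in> C. \<forall>e\<in>F. P x e}) = (\<Sum>x\<in>C. of_bool (F \<subseteq> ?M x) :: 'a)"
    if "F \<in> Pow E" for F
  proof -
    have "C \<inter> {x. F \<subseteq> ?M x} = {x \<in> C. \<forall>e\<in>F. P x e}"
      using that by blast
    then show ?thesis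
      using assms(1) by simp
  qed
  then have "(\<Sum>F\<in>Pow E. (-1) ^ card F * of_nat (card {x \<in> C. \<forall>e\<in>F. P x e})) =
      (\<Sum>F\<in>Pow E. \<Sum>x\<in>C. (-1) ^ card F * of_bool (F \<subseteq> ?M x) :: 'a)"
    by (simp add: sum_distrib_left)
  also have "\<dots> = (\<Sum>x\<in>C. \<Sum>F\<in>Pow E. (-1) ^ card F * of_bool (F \<subseteq> ?M x))"
    by (rule sum.swap)
  also have "\<dots> = (\<Sum>x\<in>C. of_bool (\<forall>e\<in>E. \<not> P x e))"
  proof (rule sum.cong)
    fix x
    have "Pow E \<inter> {F. F \<subseteq> ?M x} = Pow (?M x)"
      by blast
    then have "(\<Sum>F\<in>Pow E. (-1) ^ card F * of_bool (F \<subseteq> ?M x)) = (\<Sum>F\<in>Pow (?M x). (-1::'a) ^ card F)"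
      using assms(2) by simp
    also have "\<dots> = of_bool (\<forall>e\<in>E. \<not> P x e)"
      using assms(2) by (auto simp: sum_Pow_neg_one_power)
    finally show "(\<Sum>F\<in>Pow E. (-1::'a) ^ card F * of_bool (F \<subseteq> ?M x)) = of_bool (\<forall>e\<in>E. \<not> P x e)" .
  qed simp
  also have "\<dots> = of_nat (card {x \<in> C. \<forall>e\<in>E. \<not> P x e})"
    using assms(1) by (simp add: Int_def)
  finally show ?thesis
    by simp
qed

lemma weighted_graphD:
  assumes "weighted_graph V E wt"
  shows "finite V" "finite E" "\<Union>E \<subseteq> V" "{} \<notin> E"
proof -
  show "finite V" "\<Union>E \<subseteq> V" "{} \<notin> E"
    using assms unfolding weighted_graph_def by auto
  then have "E \<subseteq> Pow V"
    by blast
  then show "finite E"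
    using \<open>finite V\<close> finite_subset by blast
qed

lemma weighted_graph_induced:
  assumes "weighted_graph V E wt" "A \<subseteq> V"
  shows "weighted_graph A (induced_edges E A) wt"
  unfolding weighted_graph_def
proof (intro conjI ballI)
  show "finite A"
    using assms finite_subset unfolding weighted_graph_def by blast
  show "1 \<le> wt v" if "v \<in> A" for v
    using assms that unfolding weighted_graph_def by blast
  fix e
  assume "e \<in> induced_edges E A"
  then have "e \<in> E" "e \<subseteq> A"
    unfolding induced_edges_def by auto
  then obtain u w where "u \<noteq> w" "e = {u, w}"
    using assms(1) unfolding weighted_graph_def by meson
  then show "\<exists>u w. u \<noteq> w \<and> u \<in> A \<and> w \<in> A \<and> e = {u, w}"
    using \<open>e \<subseteq> A\<close> by auto
qed

lemma monochromatic_doubleton: "monochromatic \<kappa> {u, w} \<longleftrightarrow> \<kappa> u = \<kappa> w"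
  unfolding monochromatic_def by auto

lemma proper_colorings_iff:
  assumes "weighted_graph V E wt"
  shows "\<kappa> \<in> proper_colorings V E \<longleftrightarrow> \<kappa> \<in> colorings V \<and> (\<forall>e\<in>E. \<not> monochromatic \<kappa> e)"
proof -
  have "(\<forall>u\<in>V. \<forall>w\<in>V. {u, w} \<in> E \<longrightarrow> \<kappa> u \<noteq> \<kappa> w) \<longleftrightarrow> (\<forall>e\<in>E. \<not> monochromatic \<kappa> e)"
  proof
    assume proper: "\<forall>u\<in>V. \<forall>w\<in>V. {u, w} \<in> E \<longrightarrow> \<kappa> u \<noteq> \<kappa> w"
    show "\<forall>e\<in>E. \<not> monochromatic \<kappa> e"
    proof
      fix e
      assume "e \<in> E"
      then obtain u w where "u \<in> V" "w \<in> V" "e = {u, w}"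
        using assms unfolding weighted_graph_def by meson
      then show "\<not> monochromatic \<kappa> e"
        using proper \<open>e \<in> E\<close> by (simp add: monochromatic_doubleton)
    qed
  qed (metis monochromatic_doubleton)
  then show ?thesis
    unfolding proper_colorings_def colorings_def by simp
qed

lemma chromMac_eq_card:
  assumes "weighted_graph V E wt"
  shows "chromMac V E wt m =
    of_nat (card {\<kappa> \<in> colorings V. (\<forall>e\<in>E. \<not> monochromatic \<kappa> e) \<and> fibre_sum V (\<lambda>v. (1, wt v)) \<kappa> = m})"
proof -
  have "(\<forall>k. m k = (card {v \<in> V. \<kappa> v = k}, \<Sum>v\<in>{v \<in> V. \<kappa> v = k}. wt v)) \<longleftrightarrow>
      fibre_sum V (\<lambda>v. (1, wt v)) \<kappa> = m" for \<kappa>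
    unfolding fibre_sum_def sum_pair_card_sum by auto
  then show ?thesis
    unfolding chromMac_def proper_colorings_iff[OF assms] by (simp add: conj_assoc)
qed

lemma chromMac_expansion:
  assumes "weighted_graph V E wt"
  shows "chromMac V E wt = (\<lambda>m. \<Sum>F\<in>Pow E. (-1) ^ card F * pcoef (shape wt (components V F)) m)"
proof
  fix m
  let ?s = "\<lambda>v. (1::nat, wt v)"
  let ?C = "{\<kappa> \<in> colorings V. fibre_sum V ?s \<kappa> = m}"
  note G = weighted_graphD[OF assms]
  have restrict: "{\<kappa> \<in> ?C. P \<kappa>} = {\<kappa> \<in> colorings V. P \<kappa> \<and> fibre_sum V ?s \<kappa> = m}" for P
    by auto
  have "finite ?C"
    using G(1) by (intro finite_colorings_with_monomial) (simp_all add: zero_prod_def)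
  have "chromMac V E wt m = of_nat (card {\<kappa> \<in> ?C. \<forall>e\<in>E. \<not> monochromatic \<kappa> e})"
    unfolding restrict by (rule chromMac_eq_card[OF assms])
  also have "\<dots> = (\<Sum>F\<in>Pow E. (-1) ^ card F * of_nat (card {\<kappa> \<in> ?C. \<forall>e\<in>F. monochromatic \<kappa> e}))"
    by (rule card_sieve[OF \<open>finite ?C\<close> G(2)])
  also have "\<dots> = (\<Sum>F\<in>Pow E. (-1) ^ card F * pcoef (shape wt (components V F)) m)"
  proof (rule sum.cong)
    fix F
    assume "F \<in> Pow E"
    then have "\<Union>F \<subseteq> V"
      using G(3) by auto
    then show "(-1) ^ card F * of_nat (card {\<kappa> \<in> ?C. \<forall>e\<in>F. monochromatic \<kappa> e}) =
        (-1) ^ card F * pcoef (shape wt (components V F)) m"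
      using pcoef_shape_components[OF G(1)] by (simp only: restrict)
  qed simp
  finally show "chromMac V E wt m = (\<Sum>F\<in>Pow E. (-1) ^ card F * pcoef (shape wt (components V F)) m)" .
qed

lemma c_linear_on_Mac2_chromMac:
  assumes "ring_hom_C \<phi>" "c_linear_on_Mac2 \<phi> f" "weighted_graph V E wt"
  shows "f (chromMac V E wt) = (\<Sum>F\<in>Pow E. (-1) ^ card F * f (pcoef (shape wt (components V F))))"
proof -
  note G = weighted_graphD[OF assms(3)]
  have "\<forall>F\<in>Pow E. pcoef (shape wt (components V F)) \<in> Mac2"
    using G(1,3) by (auto intro!: pcoef_in_Mac2 valid_shape_components)
  then show ?thesis
    unfolding chromMac_expansion[OF assms(3)]
    by (simp add: c_linear_on_Mac2_sum[OF assms(1,2)] G(2) ring_hom_C_neg_one_power[OF assms(1)])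
qed

lemma conv_chromMac:
  assumes "ring_hom_C \<phi>" "weighted_graph V E wt"
  shows "conv \<phi> f g (chromMac V E wt) =
    (\<Sum>F\<in>Pow E. (-1) ^ card F * conv_basis f g (shape wt (components V F)))"
proof -
  note G = weighted_graphD[OF assms(2)]
  have "\<forall>F\<in>Pow E. valid_shape (shape wt (components V F))"
    using G(1,3) by (auto intro!: valid_shape_components)
  then show ?thesis
    unfolding chromMac_expansion[OF assms(2)]
    by (simp add: conv_sum[OF assms(1)] G(2) ring_hom_C_neg_one_power[OF assms(1)])
qed

section \<open>Splitting the components\<close>

lemma join_edges_split:
  assumes "{} \<notin> E" "A \<subseteq> V" "F1 \<subseteq> induced_edges E A" "F2 \<subseteq> induced_edges E (V - A)"
  shows "induced_edges (F1 \<union> F2) A = F1" "induced_edges (F1 \<union> F2) (V - A) = F2" "F1 \<inter> F2 = {}"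
    and "\<Union>(components A F1) = A"
    and "components V (F1 \<union> F2) = components A F1 \<union> components (V - A) F2"
    and "components A F1 \<inter> components (V - A) F2 = {}"
proof -
  have inside: "e \<subseteq> A" "e \<noteq> {}" if "e \<in> F1" for e
    using that assms unfolding induced_edges_def by auto
  moreover have outside: "e \<subseteq> V - A" "e \<noteq> {}" if "e \<in> F2" for e
    using that assms unfolding induced_edges_def by auto
  ultimately show "induced_edges (F1 \<union> F2) A = F1" "induced_edges (F1 \<union> F2) (V - A) = F2" "F1 \<inter> F2 = {}"
    unfolding induced_edges_def by fastforce+
  have U: "\<Union>F1 \<subseteq> A" "\<Union>F2 \<subseteq> V - A"
    using inside(1) outside(1) by blast+
  show "\<Union>(components A F1) = A"
    using U(1) by (rule Union_components)
  show "components V (F1 \<union> F2) = components A F1 \<union> components (V - A) F2"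
    using assms(2) U by (rule components_Un)
  show "components A F1 \<inter> components (V - A) F2 = {}"
  proof (intro disjoint_iff[THEN iffD2] allI impI)
    fix B
    assume "B \<in> components A F1"
    then have "B \<subseteq> A" "B \<noteq> {}"
      using components_subset[OF U(1)] components_nonempty[of B A F1] by auto
    then show "B \<notin> components (V - A) F2"
      using components_subset[OF U(2)] by auto
  qed
qed

lemma induced_edges_split_components:
  assumes "\<Union>F \<subseteq> V" "Q \<subseteq> components V F"
  shows "induced_edges F (\<Union>Q) \<union> induced_edges F (V - \<Union>Q) = F"
proof -
  have "e \<subseteq> \<Union>Q \<or> e \<subseteq> V - \<Union>Q" if "e \<in> F" for e
    using edge_inside_or_outside_components[OF assms(2) that] assms(1) that by auto
  then show ?thesis
    unfolding induced_edges_def by auto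
qed

lemma components_induced_Union:
  assumes "\<Union>F \<subseteq> V" "Q \<subseteq> components V F"
  shows "components (\<Union>Q) (induced_edges F (\<Union>Q)) = Q"
proof -
  let ?A = "\<Union>Q"
  have "component (induced_edges F ?A) v = component F v" if "v \<in> ?A" for v
  proof -
    have "component F v = component (induced_edges F ?A \<union> induced_edges F (V - ?A)) v"
      unfolding induced_edges_split_components[OF assms] ..
    also have "\<dots> = component (induced_edges F ?A) v"
    proof (rule component_Un)
      show "\<Union>(induced_edges F ?A) \<subseteq> ?A" "\<Union>(induced_edges F (V - ?A)) \<inter> ?A = {}"
        unfolding induced_edges_def by blast+
    qed (rule that)
    finally show ?thesis ..
  qed
  then have "components ?A (induced_edges F ?A) = component F ` ?A"
    unfolding components_def by (rule image_cong[OF refl])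
  also have "\<dots> = Q"
    by (rule component_image_Union[OF assms(2)])
  finally show ?thesis .
qed

lemma bij_betw_split_components:
  assumes "\<Union>E \<subseteq> V" "{} \<notin> E"
  shows "bij_betw (\<lambda>(A, F1, F2). (F1 \<union> F2, components A F1))
    (SIGMA A:Pow V. Pow (induced_edges E A) \<times> Pow (induced_edges E (V - A)))
    (SIGMA F:Pow E. Pow (components V F))"
    (is "bij_betw ?join ?Split ?Comp")
proof (rule bij_betw_byWitness[where f' = "\<lambda>(F, Q). (\<Union>Q, induced_edges F (\<Union>Q), induced_edges F (V - \<Union>Q))"])
  have join: "\<Union>(components A F1) = A" "induced_edges (F1 \<union> F2) A = F1"
    "induced_edges (F1 \<union> F2) (V - A) = F2" "components A F1 \<subseteq> components V (F1 \<union> F2)"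
    if "(A, F1, F2) \<in> ?Split" for A F1 F2
  proof -
    have "A \<subseteq> V" "F1 \<subseteq> induced_edges E A" "F2 \<subseteq> induced_edges E (V - A)"
      using that by auto
    from join_edges_split[OF assms(2) this] show
      "\<Union>(components A F1) = A" "induced_edges (F1 \<union> F2) A = F1"
      "induced_edges (F1 \<union> F2) (V - A) = F2" "components A F1 \<subseteq> components V (F1 \<union> F2)"
      by auto
  qed
  have cut: "\<Union>Q \<subseteq> V" "induced_edges F (\<Union>Q) \<union> induced_edges F (V - \<Union>Q) = F"
    "components (\<Union>Q) (induced_edges F (\<Union>Q)) = Q"
    if "(F, Q) \<in> ?Comp" for F Q
  proof -
    have F: "\<Union>F \<subseteq> V" "Q \<subseteq> components V F"
      using that assms(1) by auto
    then show "\<Union>Q \<subseteq> V"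
      using components_subset[OF F(1)] by blast
    show "induced_edges F (\<Union>Q) \<union> induced_edges F (V - \<Union>Q) = F"
      "components (\<Union>Q) (induced_edges F (\<Union>Q)) = Q"
      using induced_edges_split_components[OF F] components_induced_Union[OF F] by auto
  qed
  show "\<forall>a\<in>?Split. (\<lambda>(F, Q). (\<Union>Q, induced_edges F (\<Union>Q), induced_edges F (V - \<Union>Q))) (?join a) = a"
    using join by auto
  show "\<forall>b\<in>?Comp. ?join ((\<lambda>(F, Q). (\<Union>Q, induced_edges F (\<Union>Q), induced_edges F (V - \<Union>Q))) b) = b"
    using cut by auto
  show "?join ` ?Split \<subseteq> ?Comp"
    using join(4) by (intro image_subsetI) (auto simp: induced_edges_def)
  show "(\<lambda>(F, Q). (\<Union>Q, induced_edges F (\<Union>Q), induced_edges F (V - \<Union>Q))) ` ?Comp \<subseteq> ?Split"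
    using cut(1) by (intro image_subsetI) (auto simp: induced_edges_def)
qed

lemma sum_signed_components_split:
  fixes X :: "'v set set \<Rightarrow> 'v set set \<Rightarrow> 'a::comm_ring_1"
  assumes "finite V" "finite E" "\<Union>E \<subseteq> V" "{} \<notin> E"
  shows "(\<Sum>F\<in>Pow E. \<Sum>Q\<in>Pow (components V F). (-1) ^ card F * X Q (components V F - Q)) =
    (\<Sum>A\<in>Pow V. \<Sum>F1\<in>Pow (induced_edges E A). \<Sum>F2\<in>Pow (induced_edges E (V - A)).
       (-1) ^ card F1 * (-1) ^ card F2 * X (components A F1) (components (V - A) F2))"
proof -
  let ?h = "\<lambda>(F, Q). (-1) ^ card F * X Q (components V F - Q)"
  let ?Split = "SIGMA A:Pow V. Pow (induced_edges E A) \<times> Pow (induced_edges E (V - A))"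
  have fin_E: "finite F" if "F \<subseteq> E" for F
    using assms(2) that finite_subset by auto
  have term_eq: "?h (F1 \<union> F2, components A F1) =
      (-1) ^ card F1 * (-1) ^ card F2 * X (components A F1) (components (V - A) F2)"
    if "(A, F1, F2) \<in> ?Split" for A F1 F2
  proof -
    have split: "A \<subseteq> V" "F1 \<subseteq> induced_edges E A" "F2 \<subseteq> induced_edges E (V - A)"
      using that by auto
    then have "finite F1" "finite F2"
      using fin_E unfolding induced_edges_def by blast+
    then have "card (F1 \<union> F2) = card F1 + card F2"
      using join_edges_split(3)[OF assms(4) split] by (rule card_Un_disjoint)
    moreover have "components V (F1 \<union> F2) - components A F1 = components (V - A) F2"
      using join_edges_split(5,6)[OF assms(4) split] by auto
    ultimately show ?thesis
      by (simp add: power_add)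
  qed
  have "(\<Sum>F\<in>Pow E. \<Sum>Q\<in>Pow (components V F). (-1) ^ card F * X Q (components V F - Q)) =
      sum ?h (SIGMA F:Pow E. Pow (components V F))"
    using assms(1,2) by (subst sum.Sigma) (auto simp: components_def)
  also have "\<dots> = (\<Sum>(A, F1, F2)\<in>?Split. ?h (F1 \<union> F2, components A F1))"
    using sum.reindex_bij_betw[OF bij_betw_split_components[OF assms(3,4)], of ?h]
    by (simp add: case_prod_beta')
  also have "\<dots> = (\<Sum>(A, F1, F2)\<in>?Split.
      (-1) ^ card F1 * (-1) ^ card F2 * X (components A F1) (components (V - A) F2))"
    using term_eq by (intro sum.cong) auto
  also have "\<dots> = (\<Sum>A\<in>Pow V. \<Sum>F1\<in>Pow (induced_edges E A). \<Sum>F2\<in>Pow (induced_edges E (V - A)).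
       (-1) ^ card F1 * (-1) ^ card F2 * X (components A F1) (components (V - A) F2))"
    using assms(1,2) fin_E
    by (simp add: sum.Sigma[symmetric] sum.cartesian_product[symmetric] induced_edges_def)
  finally show ?thesis .
qed

theorem corollary3p14:
  fixes \<phi> :: "complex \<Rightarrow> 'r::comm_ring_1"
    and f g :: "ps2 \<Rightarrow> 'r"
    and V :: "'v set" and E :: "'v set set" and wt :: "'v \<Rightarrow> nat"
  assumes "ring_hom_C \<phi>"
    and "c_linear_on_Mac2 \<phi> f" and "c_linear_on_Mac2 \<phi> g"
    and "weighted_graph V E wt"
  shows "conv \<phi> f g (chromMac V E wt) =
    (\<Sum>A\<in>Pow V. f (chromMac A (induced_edges E A) wt) *
                g (chromMac (V - A) (induced_edges E (V - A)) wt))"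
proof -
  note G = weighted_graphD[OF assms(4)]
  let ?X = "\<lambda>Q R. f (pcoef (shape wt Q)) * g (pcoef (shape wt R))"
  have induced: "weighted_graph A (induced_edges E A) wt" "weighted_graph (V - A) (induced_edges E (V - A)) wt"
    if "A \<in> Pow V" for A
    using that weighted_graph_induced[OF assms(4)] by auto
  have "conv \<phi> f g (chromMac V E wt) =
      (\<Sum>F\<in>Pow E. (-1) ^ card F * conv_basis f g (shape wt (components V F)))"
    by (rule conv_chromMac[OF assms(1,4)])
  also have "\<dots> = (\<Sum>F\<in>Pow E. \<Sum>Q\<in>Pow (components V F). (-1) ^ card F * ?X Q (components V F - Q))"
    using G(1) by (simp add: conv_basis_shape components_def sum_distrib_left)
  also have "\<dots> = (\<Sum>A\<in>Pow V. \<Sum>F1\<in>Pow (induced_edges E A). \<Sum>F2\<in>Pow (induced_edges E (V - A)).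
       (-1) ^ card F1 * (-1) ^ card F2 * ?X (components A F1) (components (V - A) F2))"
    by (rule sum_signed_components_split[OF G])
  also have "\<dots> = (\<Sum>A\<in>Pow V. f (chromMac A (induced_edges E A) wt) *
                g (chromMac (V - A) (induced_edges E (V - A)) wt))"
    using induced by (intro sum.cong) (simp_all add: c_linear_on_Mac2_chromMac[OF assms(1,2)]
        c_linear_on_Mac2_chromMac[OF assms(1,3)] sum_product mult_ac)
  finally show ?thesis .
qed

end
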